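(* The sequence $((x_n, y_n))_{n \geq 0}$ of coordinates of the points visited by the Hilbert curve is $4$-regular; more precisely, for all $n \geq 0$ we have $(x_n, y_n) = v\,\gamma((n)_4)\,w$, where $(n)_4$ is the base-$4$ representation of $n$, $\gamma$ is extended to words multiplicatively, and $$v = \begin{bmatrix} 0&0&0&1&0\\ 0&0&1&1&0 \end{bmatrix},\quad w = \begin{bmatrix}1\\0\\0\\0\\0\end{bmatrix},$$ $$\gamma(0)=\begin{bmatrix} 0&0&0&0&-4\\ 1&0&-1&-1&4\\ 0&0&1&0&0\\ 0&0&0&1&0\\ 0&1&1&1&1\end{bmatrix},\quad \gamma(1)=\begin{bmatrix} 0&0&0&0&-4\\ 0&0&0&-1&0\\ 1&-2&-3&-2&4\\ 0&2&3&3&0\\ 0&1&1&1&1\end{bmatrix},$$ $$\gamma(2)=\begin{bmatrix} 0&0&0&0&-4\\ 0&-2&-2&-3&0\\ 0&0&-1&0&0\\ 1&2&3&3&4\\ 0&1&1&1&1\end{bmatrix},\quad \gamma(3)=\begin{bmatrix} 0&0&0&0&-4\\ 1&-3&-2&-2&1\\ -1&2&1&2&-4\\ 1&1&1&0&7\\ 0&1&1&1&1\end{bmatrix}.$$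
   Context: The Hilbert curve is encoded as an infinite word $\mathbf{HC} = h_0h_1h_2\cdots$ over $\{\mathtt{U},\mathtt{D},\mathtt{R},\mathtt{L}\}$ (up, down, right, left): it is the unique infinite word having every $A_n$ as a prefix, where $A_0=\epsilon$ and, with $t_D$ the coding $\mathtt{U}\mapsto\mathtt{R},\mathtt{D}\mapsto\mathtt{L},\mathtt{R}\mapsto\mathtt{U},\mathtt{L}\mapsto\mathtt{D}$ (flip about the main diagonal) and $t_H$ the coding $\mathtt{U}\mapsto\mathtt{D},\mathtt{D}\mapsto\mathtt{U},\mathtt{R}\mapsto\mathtt{L},\mathtt{L}\mapsto\mathtt{R}$ ($180^\circ$ rotation), $A_{2n+1}=A_{2n}\,\mathtt{U}\,t_D(A_{2n})\,\mathtt{R}\,t_D(A_{2n})\,\mathtt{D}\,t_H(A_{2n})$ and $A_{2n+2}=A_{2n+1}\,\mathtt{R}\,t_D(A_{2n+1})\,\mathtt{U}\,t_D(A_{2n+1})\,\mathtt{L}\,t_H(A_{2n+1})$. Starting at $(x_0,y_0)=(0,0)$, one sets $(x_{n+1},y_{n+1})=(x_n,y_n)+(1,0),(-1,0),(0,1),(0,-1)$ according as $h_n=\mathtt{R},\mathtt{L},\mathtt{U},\mathtt{D}$. A sequence is $k$-regular if some finite subset of its $k$-kernel $\{(a_{k^e n+i})_{n\ge0}: e\ge0,\ 0\le i<k^e\}$ linearly spans every element of the kernel; equivalently it admits a linear representation $a_n = v\gamma((n)_k)w$. *)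

theory Defs
  imports "Jordan_Normal_Form.Matrix"
begin

datatype dir = U | D | R | L

fun tD :: "dir \<Rightarrow> dir" where
  "tD U = R" | "tD D = L" | "tD R = U" | "tD L = D"

fun tH :: "dir \<Rightarrow> dir" where
  "tH U = D" | "tH D = U" | "tH R = L" | "tH L = R"

fun hilbA :: "nat \<Rightarrow> dir list" where
  "hilbA 0 = []"
| "hilbA (Suc n) =
     (if even n
      then hilbA n @ [U] @ map tD (hilbA n) @ [R] @ map tD (hilbA n) @ [D] @ map tH (hilbA n)
      else hilbA n @ [R] @ map tD (hilbA n) @ [U] @ map tD (hilbA n) @ [L] @ map tH (hilbA n))"

text \<open>The infinite word HC: letter n is read off the approximant A_(n+1),
  which has length 4^(n+1) - 1 > n (every A_k is a prefix of every A_m, k \<le> m).\<close>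
definition hc :: "nat \<Rightarrow> dir" where
  "hc n = hilbA (Suc n) ! n"

fun step :: "dir \<Rightarrow> int \<times> int" where
  "step R = (1, 0)" | "step L = (-1, 0)" | "step U = (0, 1)" | "step D = (0, -1)"

fun hpos :: "nat \<Rightarrow> int \<times> int" where
  "hpos 0 = (0, 0)"
| "hpos (Suc n) = (fst (hpos n) + fst (step (hc n)), snd (hpos n) + snd (step (hc n)))"

fun base4 :: "nat \<Rightarrow> nat list" where
  "base4 n = (if n = 0 then [] else base4 (n div 4) @ [n mod 4])"

definition hv :: "int mat" where
  "hv = mat_of_rows_list 5 [[0,0,0,1,0],[0,0,1,1,0]]"

definition hw :: "int mat" where
  "hw = mat_of_rows_list 1 [[1],[0],[0],[0],[0]]"

fun hgamma :: "nat \<Rightarrow> int mat" where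
  "hgamma 0 = mat_of_rows_list 5
     [[0,0,0,0,-4],[1,0,-1,-1,4],[0,0,1,0,0],[0,0,0,1,0],[0,1,1,1,1]]"
| "hgamma (Suc 0) = mat_of_rows_list 5
     [[0,0,0,0,-4],[0,0,0,-1,0],[1,-2,-3,-2,4],[0,2,3,3,0],[0,1,1,1,1]]"
| "hgamma (Suc (Suc 0)) = mat_of_rows_list 5
     [[0,0,0,0,-4],[0,-2,-2,-3,0],[0,0,-1,0,0],[1,2,3,3,4],[0,1,1,1,1]]"
| "hgamma (Suc (Suc (Suc 0))) = mat_of_rows_list 5
     [[0,0,0,0,-4],[1,-3,-2,-2,1],[-1,2,1,2,-4],[1,1,1,0,7],[0,1,1,1,1]]"
| "hgamma _ = 1\<^sub>m 5"

definition hgammaw :: "nat list \<Rightarrow> int mat" where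
  "hgammaw ds = foldr (\<lambda>d M. hgamma d * M) ds (1\<^sub>m 5)"

end

theory Submission
  imports Defs "HOL-Library.Product_Plus" "HOL-Library.Sublist"
begin

text \<open>The word A_(k+1) consists of A_k, two copies of A_k reflected in the diagonal and a
  copy rotated by 180 degrees, joined by three single steps. Hence for r < 4^k the point visited
  at time d 4^k + r is an explicit affine image of the point (x_r, y_r) visited at time r, with
  coefficients depending only on d, 2^k and the parity of k. On the other side, if u is the base-4
  expansion of r padded to length k, then gamma(u) w = (a_k, b_k - y_r, y_r - x_r, x_r, c_k) for
  integer sequences a, b, c given by a linear recurrence with explicit closed forms; prepending a
  digit d to u multiplies this column by gamma(d), and the affine formulas show that the invariant
  is preserved. Reading off the column with v yields (x_r, y_r).\<close>

definition disp :: "dir list \<Rightarrow> int \<times> int" where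
  "disp ws = sum_list (map step ws)"

lemma disp_simps [simp]:
  "disp [] = 0" "disp (w # ws) = step w + disp ws" "disp (ws @ vs) = disp ws + disp vs"
  by (simp_all add: disp_def)

lemma disp_map_tD [simp]: "disp (map tD ws) = prod.swap (disp ws)"
proof (induction ws)
  case (Cons w ws) then show ?case by (cases w) (auto simp: prod_eq_iff)
qed (simp add: zero_prod_def)

lemma disp_map_tH [simp]: "disp (map tH ws) = - disp ws"
proof (induction ws)
  case (Cons w ws) then show ?case by (cases w) auto
qed simp

lemma Suc_length_hilbA: "Suc (length (hilbA n)) = 4 ^ n"
  by (induction n) auto

lemma prefix_hilbA: "n \<le> m \<Longrightarrow> prefix (hilbA n) (hilbA m)"
proof (induction m rule: dec_induct)
  case (step m)
  then show ?case by (auto intro: prefix_order.trans)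
qed simp

lemma nth_prefix: "prefix xs ys \<Longrightarrow> i < length xs \<Longrightarrow> ys ! i = xs ! i"
  by (auto elim!: prefixE simp: nth_append)

lemma hc_eq_nth_hilbA:
  assumes "i < length (hilbA m)" shows "hc i = hilbA m ! i"
proof -
  have "Suc i < 4 ^ Suc i"
    using less_exp[of "Suc i"] power_mono[of "2::nat" 4 "Suc i"] by linarith
  then have "i < length (hilbA (Suc i))"
    using Suc_length_hilbA[of "Suc i"] by linarith
  then have "hilbA (max m (Suc i)) ! i = hilbA (Suc i) ! i"
    by (intro nth_prefix prefix_hilbA) simp_all
  moreover have "hilbA (max m (Suc i)) ! i = hilbA m ! i"
    using assms by (intro nth_prefix prefix_hilbA) simp_all
  ultimately show ?thesis by (simp add: hc_def)
qed

lemma hpos_eq_disp_take: "n \<le> length (hilbA m) \<Longrightarrow> hpos n = disp (take n (hilbA m))"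
proof (induction n)
  case (Suc n)
  then have "take (Suc n) (hilbA m) = take n (hilbA m) @ [hc n]"
    by (simp add: hc_eq_nth_hilbA Suc_le_eq take_Suc_conv_app_nth)
  with Suc show ?case by (simp add: prod_eq_iff)
qed (simp add: zero_prod_def)

lemma disp_hilbA: "disp (hilbA k) = (if even k then (0, 2 ^ k - 1) else (2 ^ k - 1, 0))"
  by (induction k) (auto simp: zero_prod_def)

lemma disp_take_blocks:
  assumes "length A = N" "length B\<^sub>1 = N" "length B\<^sub>2 = N" "r \<le> N"
  shows "disp (take (Suc N + r) (A @ c\<^sub>1 # B\<^sub>1 @ c\<^sub>2 # B\<^sub>2 @ c\<^sub>3 # B\<^sub>3)) =
           disp A + step c\<^sub>1 + disp (take r B\<^sub>1)"
    and "disp (take (2 * Suc N + r) (A @ c\<^sub>1 # B\<^sub>1 @ c\<^sub>2 # B\<^sub>2 @ c\<^sub>3 # B\<^sub>3)) =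
           disp A + step c\<^sub>1 + disp B\<^sub>1 + step c\<^sub>2 + disp (take r B\<^sub>2)"
    and "disp (take (3 * Suc N + r) (A @ c\<^sub>1 # B\<^sub>1 @ c\<^sub>2 # B\<^sub>2 @ c\<^sub>3 # B\<^sub>3)) =
           disp A + step c\<^sub>1 + disp B\<^sub>1 + step c\<^sub>2 + disp B\<^sub>2 + step c\<^sub>3 + disp (take r B\<^sub>3)"
  using assms by (simp_all add: take_Cons' add.assoc)

lemma hpos_blocks:
  assumes "r < 4 ^ k"
  shows "hpos (4 ^ k + r) =
           (if even k then (snd (hpos r), 2 ^ k + fst (hpos r))
            else (2 ^ k + snd (hpos r), fst (hpos r)))" (is ?first)
    and "hpos (2 * 4 ^ k + r) = (2 ^ k + snd (hpos r), 2 ^ k + fst (hpos r))" (is ?second)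
    and "hpos (3 * 4 ^ k + r) =
           (if even k then (2 * 2 ^ k - 1 - fst (hpos r), 2 ^ k - 1 - snd (hpos r))
            else (2 ^ k - 1 - fst (hpos r), 2 * 2 ^ k - 1 - snd (hpos r)))" (is ?third)
proof -
  define A where "A = hilbA k"
  define N where "N = length A"
  have N: "4 ^ k = Suc N" by (simp add: N_def A_def Suc_length_hilbA)
  have r: "r \<le> N" using assms N by simp
  obtain c\<^sub>1 c\<^sub>2 c\<^sub>3 where
    shape: "hilbA (Suc k) = A @ c\<^sub>1 # map tD A @ c\<^sub>2 # map tD A @ c\<^sub>3 # map tH A" and
    c: "(c\<^sub>1, c\<^sub>2, c\<^sub>3) = (if even k then (U, R, D) else (R, U, L))"
    by (cases "even k") (simp_all add: A_def)
  have hpos_block: "hpos (d * Suc N + r) = disp (take (d * Suc N + r) (hilbA (Suc k)))"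
    if "d \<le> 3" for d
  proof (rule hpos_eq_disp_take)
    have "d * Suc N \<le> 3 * Suc N" using that by (rule mult_le_mono1)
    then show "d * Suc N + r \<le> length (hilbA (Suc k))" using r by (simp add: N_def A_def)
  qed
  have "hpos r = disp (take r A)" using r by (simp add: hpos_eq_disp_take N_def A_def)
  then have "disp (take r (map tD A)) = prod.swap (hpos r)" "disp (take r (map tH A)) = - hpos r"
    by (simp_all add: take_map)
  then have "hpos (Suc N + r) = disp A + step c\<^sub>1 + prod.swap (hpos r)"
    "hpos (2 * Suc N + r) = disp A + step c\<^sub>1 + prod.swap (disp A) + step c\<^sub>2 + prod.swap (hpos r)"
    "hpos (3 * Suc N + r) =
       disp A + step c\<^sub>1 + prod.swap (disp A) + step c\<^sub>2 + prod.swap (disp A) + step c\<^sub>3 - hpos r"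
    using hpos_block[of 1] hpos_block[of 2] hpos_block[of 3]
      disp_take_blocks[OF _ _ _ r, of A "map tD A" "map tD A"]
    unfolding shape by (simp_all add: N_def)
  with c disp_hilbA[of k] show ?first ?second ?third
    unfolding N A_def by (auto simp: prod_eq_iff split: if_splits)
qed

definition col5 :: "int \<Rightarrow> int \<Rightarrow> int \<Rightarrow> int \<Rightarrow> int \<Rightarrow> int mat" where
  "col5 a b c d e = mat_of_rows_list 1 [[a], [b], [c], [d], [e]]"

lemma col5_carrier: "col5 a b c d e \<in> carrier_mat 5 1"
  by (simp add: col5_def mat_of_rows_list_def numeral_eq_Suc)

lemma col5_eq_iff [simp]:
  "col5 a b c d e = col5 a' b' c' d' e' \<longleftrightarrow> a = a' \<and> b = b' \<and> c = c' \<and> d = d' \<and> e = e'"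
proof
  assume "col5 a b c d e = col5 a' b' c' d' e'"
  then have "col5 a b c d e $$ (i, 0) = col5 a' b' c' d' e' $$ (i, 0)" for i by simp
  from this[of 0] this[of 1] this[of 2] this[of 3] this[of 4]
  show "a = a' \<and> b = b' \<and> c = c' \<and> d = d' \<and> e = e'"
    by (simp add: col5_def mat_of_rows_list_def numeral_eq_Suc)
qed simp

lemma mat5_mult_col5:
  "mat_of_rows_list 5 [[a00, a01, a02, a03, a04], [a10, a11, a12, a13, a14],
     [a20, a21, a22, a23, a24], [a30, a31, a32, a33, a34], [a40, a41, a42, a43, a44]] *
   col5 f0 f1 f2 f3 f4 =
   col5 (a00 * f0 + a01 * f1 + a02 * f2 + a03 * f3 + a04 * f4)
        (a10 * f0 + a11 * f1 + a12 * f2 + a13 * f3 + a14 * f4)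
        (a20 * f0 + a21 * f1 + a22 * f2 + a23 * f3 + a24 * f4)
        (a30 * f0 + a31 * f1 + a32 * f2 + a33 * f3 + a34 * f4)
        (a40 * f0 + a41 * f1 + a42 * f2 + a43 * f3 + a44 * f4)"
  unfolding col5_def
  by (rule eq_matI)
    (auto simp: mat_of_rows_list_def numeral_eq_Suc scalar_prod_def less_Suc_eq
      atLeast0_lessThan_Suc algebra_simps)

text \<open>Rows 0 and 4 of every gamma(d) are (0,0,0,0,-4) and (0,1,1,1,1), and rows 1 to 3 sum to
  (1,0,0,0,4). As entries 1 to 3 of the column below sum to b, this forces the recurrence.\<close>

fun hcoef :: "nat \<Rightarrow> int \<times> int \<times> int" where
  "hcoef 0 = (1, 0, 0)"
| "hcoef (Suc k) = (case hcoef k of (a, b, c) \<Rightarrow> (- 4 * c, a + 4 * c, b + c))"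

lemma hcoef_closed_form:
  assumes "hcoef k = (a, b, c)"
  shows "3 * a = (if even k then 4 - 2 ^ k else 4 - 2 * 2 ^ k) \<and>
         2 * b = (if even k then 0 else 2 ^ k) \<and>
         6 * c = (if even k then 2 * 2 ^ k - 2 else 2 ^ k - 2)"
  using assms
proof (induction k arbitrary: a b c)
  case (Suc k)
  obtain a' b' c' where "hcoef k = (a', b', c')" by (metis prod.exhaust)
  with Suc show ?case by (auto split: if_splits)
qed simp_all

definition hcol :: "nat \<Rightarrow> nat \<Rightarrow> int mat" where
  "hcol k r = (case (hcoef k, hpos r) of ((a, b, c), (x, y)) \<Rightarrow> col5 a (b - y) (y - x) x c)"

lemma hgamma_mult_hcol:
  assumes "d < 4" "r < 4 ^ k"
  shows "hgamma d * hcol k r = hcol (Suc k) (d * 4 ^ k + r)"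
proof -
  obtain a b c where abc: "hcoef k = (a, b, c)" by (metis prod.exhaust)
  obtain x y where xy: "hpos r = (x, y)" by (metis prod.exhaust)
  have hgamma_numerals: "hgamma 1 = hgamma (Suc 0)" "hgamma 2 = hgamma (Suc (Suc 0))"
    "hgamma 3 = hgamma (Suc (Suc (Suc 0)))" by (simp_all add: numeral_eq_Suc)
  note defs = hcol_def abc xy hpos_blocks[OF assms(2)] mat5_mult_col5 hgamma_numerals
  from assms(1) consider "d = 0" | "d = 1" | "d = 2" | "d = 3" by linarith
  then show ?thesis
    using hcoef_closed_form[OF abc]
    by cases (cases "even k"; simp add: defs; linarith)+
qed

fun digits4 :: "nat \<Rightarrow> nat \<Rightarrow> nat list" where
  "digits4 0 r = []"
| "digits4 (Suc k) r = digits4 k (r div 4) @ [r mod 4]"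

lemma digits4_Suc_msd:
  assumes "d < 4" "r < 4 ^ k"
  shows "digits4 (Suc k) (d * 4 ^ k + r) = d # digits4 k r"
  using assms(2)
proof (induction k arbitrary: r)
  case (Suc k)
  have "r div 4 < 4 ^ k" using Suc.prems by (simp add: less_mult_imp_div_less mult.commute)
  have "digits4 (Suc (Suc k)) (d * 4 ^ Suc k + r) =
          digits4 (Suc k) (d * 4 ^ k + r div 4) @ [r mod 4]"
    by (subst digits4.simps(2)) (simp add: mult.left_commute[of d] del: digits4.simps)
  also have "\<dots> = d # digits4 k (r div 4) @ [r mod 4]"
    using Suc.IH[OF \<open>r div 4 < 4 ^ k\<close>] by simp
  finally show ?case by simp
qed (use assms(1) in simp)

lemma base4_0 [simp]: "base4 0 = []"
  by simp

lemma base4_pos: "0 < n \<Longrightarrow> base4 n = base4 (n div 4) @ [n mod 4]"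
  by simp

declare base4.simps [simp del]

lemma base4_eq_digits4: "base4 n = digits4 (length (base4 n)) n"
proof (induction n rule: base4.induct)
  case (1 n)
  then show ?case by (cases "n = 0") (simp_all add: base4_pos)
qed

lemma less_4_pow_length_base4: "n < 4 ^ length (base4 n)"
proof (induction n rule: base4.induct)
  case (1 n)
  then show ?case by (cases "n = 0") (simp_all add: base4_pos div_less_iff_less_mult)
qed

lemma hv_mult_col5:
  "(hv * col5 a b c d e) $$ (0, 0) = d" "(hv * col5 a b c d e) $$ (1, 0) = c + d"
  by (simp_all add: hv_def col5_def mat_of_rows_list_def scalar_prod_def numeral_eq_Suc
      atLeast0_lessThan_Suc)

lemma hgamma_carrier: "hgamma d \<in> carrier_mat 5 5"
  by (induction d rule: hgamma.induct) (simp_all add: mat_of_rows_list_def numeral_eq_Suc)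

lemma hgammaw_carrier: "hgammaw ds \<in> carrier_mat 5 5"
  by (induction ds) (auto simp: hgammaw_def intro!: mult_carrier_mat[OF hgamma_carrier])

lemma hv_carrier: "hv \<in> carrier_mat 2 5"
  by (simp add: hv_def mat_of_rows_list_def numeral_eq_Suc)

lemma hw_eq_col5: "hw = col5 1 0 0 0 0"
  by (simp add: hw_def col5_def)

lemma hgammaw_digits4_mult_hw: "r < 4 ^ k \<Longrightarrow> hgammaw (digits4 k r) * hw = hcol k r"
proof (induction k arbitrary: r)
  case 0
  then show ?case
    using left_mult_one_mat[OF col5_carrier]
    by (simp add: hgammaw_def hcol_def hw_eq_col5 zero_prod_def)
next
  case (Suc k)
  define d where "d = r div 4 ^ k"
  define r' where "r' = r mod 4 ^ k"
  have d: "d < 4" using Suc.prems by (simp add: d_def less_mult_imp_div_less)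
  have r': "r' < 4 ^ k" by (simp add: r'_def)
  have r: "r = d * 4 ^ k + r'" by (simp only: d_def r'_def div_mult_mod_eq)
  have "hgammaw (digits4 (Suc k) r) = hgamma d * hgammaw (digits4 k r')"
    unfolding r digits4_Suc_msd[OF d r'] by (simp add: hgammaw_def)
  then have "hgammaw (digits4 (Suc k) r) * hw = (hgamma d * hgammaw (digits4 k r')) * hw"
    by simp
  also have "\<dots> = hgamma d * (hgammaw (digits4 k r') * hw)"
    using hgamma_carrier hgammaw_carrier col5_carrier unfolding hw_eq_col5 by (rule assoc_mult_mat)
  also have "\<dots> = hcol (Suc k) r"
    using Suc.IH[OF r'] hgamma_mult_hcol[OF d r'] r by simp
  finally show ?case .
qed

theorem mainTheorem2:
  fixes n :: nat
  shows "hpos n = ((hv * hgammaw (base4 n) * hw) $$ (0, 0),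
                   (hv * hgammaw (base4 n) * hw) $$ (1, 0))"
proof -
  obtain a b c where abc: "hcoef (length (base4 n)) = (a, b, c)" by (metis prod.exhaust)
  obtain x y where xy: "hpos n = (x, y)" by (metis prod.exhaust)
  have "hgammaw (base4 n) * hw = col5 a (b - y) (y - x) x c"
    using hgammaw_digits4_mult_hw[OF less_4_pow_length_base4, of n]
    by (simp add: base4_eq_digits4[symmetric] hcol_def abc xy)
  moreover have "hv * hgammaw (base4 n) * hw = hv * (hgammaw (base4 n) * hw)"
    using hv_carrier hgammaw_carrier col5_carrier unfolding hw_eq_col5 by (rule assoc_mult_mat)
  ultimately show ?thesis using hv_mult_col5[of a "b - y" "y - x" x c] by (simp add: xy)
qed

end
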